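(* Let $N\le M$, let $X_N=[x_1\ \cdots\ x_N]^\top\in\mathbb{R}^{N\times M}$ have full row rank, let $Y_N=[y_1\ \cdots\ y_N]^\top\in\mathbb{R}^N$, and let $\theta_{MN}=X_N^+Y_N$ with $X_N^+=X_N^\top(X_NX_N^\top)^{-1}$. Fix $\sigma^2>0$, a test vector $x\in\mathbb{R}^M$ and a test label $y\in\mathbb{R}$. Let $\lambda_y>0$ be a regularization factor such that the vector $$\hat\theta(z^N;x,y)=\theta_N+\left(X_{N+1}^\top X_{N+1}+\lambda_y I\right)^{-1}x\,(y-x^\top\theta_N),\qquad \theta_N=\left(X_N^\top X_N+\lambda_y I\right)^{-1}X_N^\top Y_N,$$ where $X_{N+1}=[x_1\ \cdots\ x_N\ x]^\top$, satisfies the norm constraint $\|\hat\theta(z^N;x,y)\|=\|\theta_{MN}\|$. Let $$K_0=1+x^\top X_N^+X_N^{+\top}x,\qquad \|x_\perp\|^2=x^\top\left[I-X_N^+X_N\right]x .$$ Then $$p_{\hat\theta(z^N;x,y)}(y|x)\le\frac{1}{\sqrt{2\pi\sigma^2}}\exp\left\{-\frac{(y-x^\top\theta_N)^2}{2\sigma^2K_0^2\left(1+\frac{\|x_\perp\|^2}{K_0\lambda_y}\right)^2}\right\}.$$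
   Context: For $\theta\in\mathbb{R}^M$, $p_\theta(y|x)=\frac{1}{\sqrt{2\pi\sigma^2}}\exp\{-\frac{1}{2\sigma^2}(y-x^\top\theta)^2\}$ is the Gaussian linear-regression likelihood with noise variance $\sigma^2$. $\|\cdot\|$ is the Euclidean norm. The vector $\hat\theta(z^N;x,y)$ is the ridge-regression solution (regularization $\lambda_y$) on the training set augmented by $(x,y)$, written in recursive least-squares form; it is the "genie" learner of the norm-constrained hypothesis set $\{p_\theta:\|\theta\|\le\|\theta_{MN}\|\}$. *)

theory Defs
  imports "HOL-Analysis.Analysis"
begin

definition gauss_lik :: "real \<Rightarrow> real^'m \<Rightarrow> real^'m \<Rightarrow> real \<Rightarrow> real" where
  "gauss_lik sigma2 \<theta> x y =
     1 / sqrt (2 * pi * sigma2) * exp (- (1 / (2 * sigma2)) * (y - x \<bullet> \<theta>)\<^sup>2)"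

definition pinv_row :: "real^'m^'n \<Rightarrow> real^'n^'m" where
  "pinv_row X = transpose X ** matrix_inv (X ** transpose X)"

text \<open>The matrix X_{N+1} obtained by appending the row x to X_N; the new row is indexed by None.\<close>
definition append_row :: "real^'m^'n \<Rightarrow> real^'m \<Rightarrow> real^'m^('n option)" where
  "append_row X x = (\<chi> i. case i of Some j \<Rightarrow> X $ j | None \<Rightarrow> x)"

definition ridge :: "real \<Rightarrow> real^'m^'n \<Rightarrow> real^'n \<Rightarrow> real^'m" where
  "ridge lam X Y = matrix_inv (transpose X ** X + lam *\<^sub>R mat 1) *v (transpose X *v Y)"

definition theta_hat :: "real \<Rightarrow> real^'m^'n \<Rightarrow> real^'n \<Rightarrow> real^'m \<Rightarrow> real \<Rightarrow> real^'m" where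
  "theta_hat lam X Y x y =
     ridge lam X Y +
     (y - x \<bullet> ridge lam X Y) *\<^sub>R
       (matrix_inv (transpose (append_row X x) ** append_row X x + lam *\<^sub>R mat 1) *v x)"

end

theory Submission
  imports Defs
begin

(* With B = X^T X + lam I, the Sherman-Morrison formula shows that the residual y - x^T theta_hat
   of the genie is the ridge residual y - x^T theta_N divided by 1 + x^T B^-1 x, so the likelihood
   is at most the claimed Gaussian once 1 + x^T B^-1 x <= K0 + |x_perp|^2 / lam.  For the latter
   write x = B u, w = X u and g = (X X^T)^-1 w: then x^T B^-1 x, x^T X^+ X^+T x and |x_perp|^2
   are explicit quadratic expressions in u, w, g, and the two sides differ by
   lam w^T g + lam^2 g^T g >= 0. *)

declare transpose_matrix_vector [simp del]

lemma inner_matrix_vector_transpose: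
  fixes A :: "real^'n^'m"
  shows "(A *v a) \<bullet> b = a \<bullet> (transpose A *v b)"
  by (metis dot_lmul_matrix vector_transpose_matrix)

lemma inner_mult_transpose_self:
  fixes P :: "real^'n^'m"
  shows "x \<bullet> ((P ** transpose P) *v x) = (transpose P *v x) \<bullet> (transpose P *v x)"
  by (simp add: matrix_vector_mul_assoc [symmetric] inner_matrix_vector_transpose inner_commute)

lemma invertible_iff_kernel_trivial:
  fixes A :: "'a::field^'n^'n"
  shows "invertible A \<longleftrightarrow> (\<forall>z. A *v z = 0 \<longrightarrow> z = 0)"
  by (simp add: invertible_left_inverse matrix_left_invertible_ker)

lemma matrix_inv_left:
  fixes A :: "'a::field^'n^'n"
  assumes "invertible A"
  shows "matrix_inv A ** A = mat 1"
  using assms unfolding invertible_def matrix_inv_def by (rule someI2_ex) blast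

lemma matrix_inv_right:
  fixes A :: "'a::field^'n^'n"
  assumes "invertible A"
  shows "A ** matrix_inv A = mat 1"
  using assms unfolding invertible_def matrix_inv_def by (rule someI2_ex) blast

lemma matrix_inv_mult_vector_cancel:
  fixes A :: "'a::field^'n^'n"
  assumes "invertible A"
  shows "matrix_inv A *v (A *v z) = z" and "A *v (matrix_inv A *v z) = z"
  by (simp_all add: matrix_vector_mul_assoc matrix_inv_left matrix_inv_right assms)

lemma matrix_inv_unique:
  fixes A B :: "'a::field^'n^'n"
  assumes "B ** A = mat 1"
  shows "matrix_inv A = B"
proof -
  have "invertible A"
    using assms invertible_left_inverse by blast
  then have "matrix_inv A = (B ** A) ** matrix_inv A"
    by (simp add: assms)
  also have "\<dots> = B"
    by (simp add: matrix_mul_assoc [symmetric] matrix_inv_right \<open>invertible A\<close>)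
  finally show ?thesis .
qed

lemma matrix_inv_symmetric:
  fixes A :: "'a::field^'n^'n"
  assumes "invertible A" and "transpose A = A"
  shows "transpose (matrix_inv A) = matrix_inv A"
proof -
  have "transpose (matrix_inv A) ** A = mat 1"
    using matrix_inv_right [OF assms(1)] assms(2) by (metis matrix_transpose_mul transpose_mat)
  then show ?thesis
    by (rule matrix_inv_unique [symmetric])
qed

lemma inner_gram_ridge:
  fixes X :: "real^'m^'n"
  shows "z \<bullet> ((transpose X ** X + lam *\<^sub>R mat 1) *v z) = (X *v z) \<bullet> (X *v z) + lam * (z \<bullet> z)"
  by (simp add: matrix_vector_mult_add_rdistrib scaleR_matrix_vector_assoc [symmetric]
      matrix_vector_mul_assoc [symmetric] inner_add_right inner_matrix_vector_transpose inner_commute)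

lemma invertible_gram_ridge:
  fixes X :: "real^'m^'n"
  assumes "lam > 0"
  shows "invertible (transpose X ** X + lam *\<^sub>R mat 1)"
  unfolding invertible_iff_kernel_trivial
proof (intro allI impI)
  fix z assume "(transpose X ** X + lam *\<^sub>R mat 1) *v z = 0"
  then have "(X *v z) \<bullet> (X *v z) + lam * (z \<bullet> z) = 0"
    by (metis inner_gram_ridge inner_zero_right)
  with assms show "z = 0"
    by (smt (verit) inner_ge_zero inner_eq_zero_iff mult_pos_pos)
qed

lemma inner_matrix_inv_gram_ridge_nonneg:
  fixes X :: "real^'m^'n"
  assumes "lam > 0"
  shows "0 \<le> x \<bullet> (matrix_inv (transpose X ** X + lam *\<^sub>R mat 1) *v x)"
proof -
  define B where "B = transpose X ** X + lam *\<^sub>R mat 1"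
  define u where "u = matrix_inv B *v x"
  have "B *v u = x"
    using invertible_gram_ridge [OF assms, of X] by (simp add: u_def B_def matrix_inv_mult_vector_cancel)
  then have "u \<bullet> x = (X *v u) \<bullet> (X *v u) + lam * (u \<bullet> u)"
    using inner_gram_ridge [of u X lam] by (simp add: B_def)
  with assms have "0 \<le> u \<bullet> x"
    by simp
  then show ?thesis
    by (simp add: u_def B_def inner_commute)
qed

lemma invertible_gram_full_row_rank:
  fixes X :: "real^'m^'n"
  assumes "rank X = CARD('n)"
  shows "invertible (X ** transpose X)"
  unfolding invertible_iff_kernel_trivial
proof (intro allI impI)
  have inj: "inj ((*v) (transpose X))"
    using assms full_rank_injective rank_transpose by metis
  fix z assume "(X ** transpose X) *v z = 0"
  then have "(transpose X *v z) \<bullet> (transpose X *v z) = 0"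
    by (metis inner_matrix_vector_transpose inner_zero_right matrix_vector_mul_assoc transpose_transpose)
  then show "z = 0"
    using inj by (metis inner_eq_zero_iff inj_eq matrix_vector_mult_0_right)
qed

lemma gram_append_row_mult_vector:
  fixes X :: "real^'m^'n"
  shows "(transpose (append_row X x) ** append_row X x) *v z = (transpose X ** X) *v z + (x \<bullet> z) *\<^sub>R x"
  by (simp add: append_row_def vec_eq_iff matrix_vector_mult_def matrix_matrix_mult_def transpose_def
      UNIV_option_conv sum_distrib_left sum_distrib_right inner_vec_def algebra_simps sum.reindex sum.distrib)

text \<open>Sherman--Morrison: \<open>v = (B + x x\<^sup>T)\<inverse> x\<close> is \<open>B\<inverse> x\<close> scaled by \<open>1 / (1 + x\<^sup>T B\<inverse> x)\<close>.\<close>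
lemma rank_one_update_solution:
  fixes B :: "real^'n^'n"
  assumes "invertible B" and "B *v v + (x \<bullet> v) *\<^sub>R x = x"
  shows "(1 + x \<bullet> (matrix_inv B *v x)) * (1 - x \<bullet> v) = 1"
proof -
  have "B *v v = (1 - x \<bullet> v) *\<^sub>R x"
    using assms(2) by (simp add: algebra_simps)
  then have "v = (1 - x \<bullet> v) *\<^sub>R (matrix_inv B *v x)"
    by (metis assms(1) matrix_inv_mult_vector_cancel(1) matrix_vector_mult_scaleR)
  then have "x \<bullet> v = (1 - x \<bullet> v) * (x \<bullet> (matrix_inv B *v x))"
    by (metis inner_scaleR_right)
  then show ?thesis
    by (simp add: algebra_simps)
qed

lemma residual_theta_hat:
  fixes X :: "real^'m^'n"
  assumes "lam > 0"
  shows "y - x \<bullet> theta_hat lam X Y x y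
    = (y - x \<bullet> ridge lam X Y) / (1 + x \<bullet> (matrix_inv (transpose X ** X + lam *\<^sub>R mat 1) *v x))"
proof -
  define B where "B = transpose X ** X + lam *\<^sub>R mat 1"
  define A where "A = transpose (append_row X x) ** append_row X x + lam *\<^sub>R mat 1"
  define v where "v = matrix_inv A *v x"
  have "A *v v = x"
    using invertible_gram_ridge [OF assms, of "append_row X x"]
    by (simp add: A_def v_def matrix_inv_mult_vector_cancel)
  then have "B *v v + (x \<bullet> v) *\<^sub>R x = x"
    by (simp add: A_def B_def matrix_vector_mult_add_rdistrib gram_append_row_mult_vector algebra_simps)
  then have "(1 + x \<bullet> (matrix_inv B *v x)) * (1 - x \<bullet> v) = 1"
    using invertible_gram_ridge [OF assms, of X] by (simp add: B_def rank_one_update_solution)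
  then have "1 - x \<bullet> v = 1 / (1 + x \<bullet> (matrix_inv B *v x))"
    by (metis mult_zero_left nonzero_mult_div_cancel_left zero_neq_one)
  moreover have "y - x \<bullet> theta_hat lam X Y x y = (y - x \<bullet> ridge lam X Y) * (1 - x \<bullet> v)"
    by (simp add: theta_hat_def A_def v_def inner_add_right algebra_simps)
  ultimately show ?thesis
    by (simp add: B_def)
qed

lemma gauss_lik_le:
  assumes "\<sigma>2 > 0" and "r\<^sup>2 \<le> (y - x \<bullet> \<theta>)\<^sup>2"
  shows "gauss_lik \<sigma>2 \<theta> x y \<le> 1 / sqrt (2 * pi * \<sigma>2) * exp (- (r\<^sup>2 / (2 * \<sigma>2)))"
  using assms unfolding gauss_lik_def by (simp add: divide_right_mono)

lemma pinv_row_quadratic_forms: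
  fixes X :: "real^'m^'n"
  assumes "rank X = CARD('n)" and w: "w = X *v u" and x: "x = transpose X *v w + lam *\<^sub>R u"
  defines "g \<equiv> matrix_inv (X ** transpose X) *v w"
  shows "x \<bullet> ((pinv_row X ** transpose (pinv_row X)) *v x)
      = w \<bullet> w + 2 * lam * (w \<bullet> g) + lam\<^sup>2 * (g \<bullet> g)"
    and "x \<bullet> ((mat 1 - pinv_row X ** X) *v x) = lam\<^sup>2 * (u \<bullet> u - w \<bullet> g)"
    and "0 \<le> w \<bullet> g"
proof -
  define G where "G = X ** transpose X"
  have G_inv: "invertible G"
    using assms(1) by (simp add: G_def invertible_gram_full_row_rank)
  have G_sym: "transpose G = G"
    by (simp add: G_def matrix_transpose_mul)
  have Gv: "G *v z = X *v (transpose X *v z)" for z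
    by (simp add: G_def matrix_vector_mul_assoc)
  have w_eq: "w = G *v g"
    using G_inv by (simp add: g_def G_def matrix_inv_mult_vector_cancel)
  have Xx: "X *v x = G *v w + lam *\<^sub>R w"
    by (simp add: x Gv matrix_vector_right_distrib matrix_vector_mult_scaleR w)
  have Gi_Xx: "matrix_inv G *v (X *v x) = w + lam *\<^sub>R g"
    using G_inv by (simp add: Xx matrix_vector_right_distrib matrix_vector_mult_scaleR
        matrix_inv_mult_vector_cancel g_def G_def)
  have "transpose (pinv_row X) *v x = w + lam *\<^sub>R g"
    using matrix_inv_symmetric [OF G_inv G_sym]
    by (simp add: pinv_row_def G_def [symmetric] matrix_transpose_mul matrix_vector_mul_assoc [symmetric] Gi_Xx)
  then show "x \<bullet> ((pinv_row X ** transpose (pinv_row X)) *v x)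
      = w \<bullet> w + 2 * lam * (w \<bullet> g) + lam\<^sup>2 * (g \<bullet> g)"
    by (simp add: inner_mult_transpose_self inner_add_left inner_add_right inner_commute
        power2_eq_square algebra_simps)
  have Gw_g: "(G *v w) \<bullet> g = w \<bullet> w"
    by (simp add: inner_matrix_vector_transpose G_sym w_eq [symmetric])
  have Xtw_u: "(transpose X *v w) \<bullet> u = w \<bullet> w"
    by (simp add: inner_matrix_vector_transpose w [symmetric])
  have Xtw_Xtw: "(transpose X *v w) \<bullet> (transpose X *v w) = (G *v w) \<bullet> w"
    by (simp add: Gv inner_matrix_vector_transpose)
  have xx: "x \<bullet> x = (transpose X *v w) \<bullet> (transpose X *v w) + 2 * lam * (w \<bullet> w) + lam\<^sup>2 * (u \<bullet> u)"
    using x by (simp add: inner_add_left inner_add_right Xtw_u inner_commute [of u "transpose X *v w"]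
        power2_eq_square algebra_simps)
  have "x \<bullet> ((mat 1 - pinv_row X ** X) *v x) = x \<bullet> x - (X *v x) \<bullet> (matrix_inv G *v (X *v x))"
    by (simp add: pinv_row_def G_def [symmetric] matrix_vector_mult_diff_rdistrib
        matrix_vector_mul_assoc [symmetric] inner_diff_right inner_matrix_vector_transpose)
  also have "\<dots> = lam\<^sup>2 * (u \<bullet> u - w \<bullet> g)"
    unfolding xx Gi_Xx unfolding Xx
    by (simp add: inner_add_left inner_add_right Gw_g Xtw_Xtw inner_commute [of w "G *v w"]
        power2_eq_square algebra_simps)
  finally show "x \<bullet> ((mat 1 - pinv_row X ** X) *v x) = lam\<^sup>2 * (u \<bullet> u - w \<bullet> g)" .
  have "w \<bullet> g = (transpose X *v g) \<bullet> (transpose X *v g)"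
    by (simp add: w_eq Gv inner_matrix_vector_transpose)
  then show "0 \<le> w \<bullet> g"
    by simp
qed

lemma inner_matrix_inv_gram_ridge_le:
  fixes X :: "real^'m^'n"
  assumes "rank X = CARD('n)" and "lam > 0"
  shows "x \<bullet> (matrix_inv (transpose X ** X + lam *\<^sub>R mat 1) *v x)
    \<le> x \<bullet> ((pinv_row X ** transpose (pinv_row X)) *v x)
      + x \<bullet> ((mat 1 - pinv_row X ** X) *v x) / lam"
proof -
  define u where "u = matrix_inv (transpose X ** X + lam *\<^sub>R mat 1) *v x"
  define w where "w = X *v u"
  define g where "g = matrix_inv (X ** transpose X) *v w"
  have x_eq: "x = transpose X *v w + lam *\<^sub>R u"
    using matrix_inv_mult_vector_cancel(2) [OF invertible_gram_ridge [OF assms(2), of X], of x]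
    by (simp add: u_def [symmetric] w_def matrix_vector_mult_add_rdistrib matrix_vector_mul_assoc
        scaleR_matrix_vector_assoc [symmetric])
  note forms = pinv_row_quadratic_forms [OF assms(1) w_def x_eq, folded g_def]
  have "x \<bullet> u = w \<bullet> w + lam * (u \<bullet> u)"
    by (subst x_eq) (simp add: inner_add_left inner_matrix_vector_transpose w_def [symmetric])
  with forms(3) assms(2)
  have "x \<bullet> u \<le> w \<bullet> w + 2 * lam * (w \<bullet> g) + lam\<^sup>2 * (g \<bullet> g) + lam\<^sup>2 * (u \<bullet> u - w \<bullet> g) / lam"
    by (simp add: power2_eq_square field_simps)
  then show ?thesis
    by (simp add: u_def forms(1,2))
qed

theorem lemma1:
  fixes X :: "real^'m^'n" and Y :: "real^'n" and x :: "real^'m"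
    and y \<sigma>2 lam :: real
  assumes "CARD('n) \<le> CARD('m)"
    and "rank X = CARD('n)"
    and "\<sigma>2 > 0"
    and "lam > 0"
    and "norm (theta_hat lam X Y x y) = norm (pinv_row X *v Y)"
  shows "gauss_lik \<sigma>2 (theta_hat lam X Y x y) x y
    \<le> 1 / sqrt (2 * pi * \<sigma>2) *
       exp (- ((y - x \<bullet> ridge lam X Y)\<^sup>2 /
         (2 * \<sigma>2 * (1 + x \<bullet> ((pinv_row X ** transpose (pinv_row X)) *v x))\<^sup>2 *
           (1 + x \<bullet> ((mat 1 - pinv_row X ** X) *v x) /
             ((1 + x \<bullet> ((pinv_row X ** transpose (pinv_row X)) *v x)) * lam))\<^sup>2)))"
proof -
  define e where "e = y - x \<bullet> ridge lam X Y"
  define q where "q = x \<bullet> (matrix_inv (transpose X ** X + lam *\<^sub>R mat 1) *v x)"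
  define K where "K = 1 + x \<bullet> ((pinv_row X ** transpose (pinv_row X)) *v x)"
  define p where "p = x \<bullet> ((mat 1 - pinv_row X ** X) *v x)"
  have "0 \<le> q"
    using assms(4) by (simp add: q_def inner_matrix_inv_gram_ridge_nonneg)
  moreover have "1 + q \<le> K + p / lam"
    using inner_matrix_inv_gram_ridge_le [OF assms(2,4)] by (simp add: q_def K_def p_def)
  ultimately have "(e / (K + p / lam))\<^sup>2 \<le> (y - x \<bullet> theta_hat lam X Y x y)\<^sup>2"
    using assms(4) by (simp add: residual_theta_hat e_def q_def power_divide divide_left_mono power_mono)
  then have bound: "gauss_lik \<sigma>2 (theta_hat lam X Y x y) x y
      \<le> 1 / sqrt (2 * pi * \<sigma>2) * exp (- ((e / (K + p / lam))\<^sup>2 / (2 * \<sigma>2)))"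
    using assms(3) by (rule gauss_lik_le [rotated])
  have "K \<ge> 1"
    by (simp add: K_def inner_mult_transpose_self)
  then have "K + p / lam = K * (1 + p / (K * lam))"
    by (simp add: field_simps)
  then have "(e / (K + p / lam))\<^sup>2 / (2 * \<sigma>2) = e\<^sup>2 / (2 * \<sigma>2 * K\<^sup>2 * (1 + p / (K * lam))\<^sup>2)"
    by (simp add: power_divide power_mult_distrib)
  with bound show ?thesis
    by (simp only: e_def K_def p_def)
qed

end
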